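(* The set of all sampled ReLU networks $\Phi\colon\mathcal{X}\to\mathbb{R}^{N_{L+1}}$, of arbitrary depth and arbitrary widths, is dense in $C(\mathcal{X},\mathbb{R}^{N_{L+1}})$ with respect to the uniform norm.
   Context: Input space: Fix $D\ge1$, Euclidean norm and inner product on $\mathbb{R}^D$. For $A\subseteq\mathbb{R}^D$ let $d(z,A)=\inf_{a\in A}\|z-a\|$, $\mathrm{Med}(A)=\{z:\exists p\neq q\in A,\ \|p-z\|=\|q-z\|=d(z,A)\}$, reach $\tau_A=\inf_{a\in A}d(a,\mathrm{Med}(A))$. Let $\mathcal{X}'\subset\mathbb{R}^D$ be nonempty compact with $\tau_{\mathcal{X}'}>0$, fix $0<\epsilon_I<\min\{\tau_{\mathcal{X}'},1\}$, and $\mathcal{X}=\{x:d(x,\mathcal{X}')\le\epsilon_I\}$. The output dimension $N_{L+1}\ge1$ is fixed. Networks: with $\phi(t)=\max\{t,0\}$, $N_0=D$, a network with $L$ hidden layers computes $\Phi^{(0)}(x)=x$, $\Phi^{(l)}(x)=\phi(W_l\Phi^{(l-1)}(x)-b_l)$ for $l=1,\dots,L$, $\Phi(x)=W_{L+1}\Phi^{(L)}(x)-b_{L+1}$; $w_{l,i},b_{l,i}$ denote the $i$-th row of $W_l$ and entry of $b_l$. It is a sampled network if for all $l\le L$, $i\le N_l$ there are $x^{(1)}_{0,i},x^{(2)}_{0,i}\in\mathcal{X}$ such that $x^{(j)}_{l-1,i}=\Phi^{(l-1)}(x^{(j)}_{0,i})$ are distinct and $w_{l,i}=\frac{x^{(2)}_{l-1,i}-x^{(1)}_{l-1,i}}{\|x^{(2)}_{l-1,i}-x^{(1)}_{l-1,i}\|^2}$,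 $b_{l,i}=\langle w_{l,i},x^{(1)}_{l-1,i}\rangle$; $W_{L+1},b_{L+1}$ are unrestricted. *)

theory Defs
  imports "HOL-Analysis.Analysis"
begin

definition medial_axis :: "'a::euclidean_space set \<Rightarrow> 'a set" where
  "medial_axis A = {z. \<exists>p q. p \<in> A \<and> q \<in> A \<and> p \<noteq> q \<and>
       dist p z = infdist z A \<and> dist q z = infdist z A}"

text \<open>Reach as an extended real: the infimum over a in A of d(a, Med A),
  with d(a, empty) = +infinity (so an empty medial axis gives reach +infinity).\<close>
definition reach :: "'a::euclidean_space set \<Rightarrow> ereal" where
  "reach A = (INF a\<in>A. (if medial_axis A = {} then (\<infinity>::ereal)
                         else ereal (infdist a (medial_axis A))))"

definition dotl :: "real list \<Rightarrow> real list \<Rightarrow> real" where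
  "dotl xs ys = sum_list (map2 (*) xs ys)"

definition norml :: "real list \<Rightarrow> real" where
  "norml xs = sqrt (dotl xs xs)"

definition minusl :: "real list \<Rightarrow> real list \<Rightarrow> real list" where
  "minusl xs ys = map2 (-) xs ys"

definition scalel :: "real \<Rightarrow> real list \<Rightarrow> real list" where
  "scalel c xs = map (\<lambda>t. c * t) xs"

definition relu :: "real \<Rightarrow> real" where
  "relu t = max t 0"

text \<open>A network with L = 1 + length Ls hidden layers, input space 'a (= R^D),
  output space 'b (= R^{N_{L+1}}).  Layer 1 is a list of neurons (w_{1,i}, b_{1,i})
  with w_{1,i} in 'a; layer l >= 2 is a list of neurons (w_{l,i}, b_{l,i}) with
  w_{l,i} a real list of length N_{l-1}.  The output layer is given by the columns
  cs of W_{L+1} (one vector in 'b per neuron of layer L) and the bias b_{L+1}.\<close>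

type_synonym 'a first_layer = "('a \<times> real) list"
type_synonym hidden_layers = "((real list \<times> real) list) list"
type_synonym ('a, 'b) relu_net = "'a first_layer \<times> hidden_layers \<times> 'b list \<times> 'b"

definition eval_first :: "('a::euclidean_space) first_layer \<Rightarrow> 'a \<Rightarrow> real list" where
  "eval_first L1 x = map (\<lambda>(w, b). relu (w \<bullet> x - b)) L1"

definition eval_layer :: "(real list \<times> real) list \<Rightarrow> real list \<Rightarrow> real list" where
  "eval_layer W h = map (\<lambda>(w, b). relu (dotl w h - b)) W"

text \<open>hid L1 Ls k x = Phi^{(k+1)}(x), the output of hidden layer k+1.\<close>
definition hid :: "('a::euclidean_space) first_layer \<Rightarrow> hidden_layers \<Rightarrow> nat \<Rightarrow> 'a \<Rightarrow> real list" where
  "hid L1 Ls k x = foldl (\<lambda>h W. eval_layer W h) (eval_first L1 x) (take k Ls)"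

definition net_eval :: "('a::euclidean_space, 'b::real_vector) relu_net \<Rightarrow> 'a \<Rightarrow> 'b" where
  "net_eval N x = (case N of (L1, Ls, cs, b) \<Rightarrow>
      sum_list (map2 (\<lambda>t c. t *\<^sub>R c) (hid L1 Ls (length Ls) x) cs) - b)"

definition well_formed :: "('a::euclidean_space, 'b::real_vector) relu_net \<Rightarrow> bool" where
  "well_formed N = (case N of (L1, Ls, cs, b) \<Rightarrow>
      L1 \<noteq> [] \<and> (\<forall>k<length Ls. Ls ! k \<noteq> [] \<and>
          (\<forall>(w, c) \<in> set (Ls ! k). length w = (if k = 0 then length L1 else length (Ls ! (k - 1)))))
      \<and> length cs = (if Ls = [] then length L1 else length (last Ls)))"

definition sampled :: "'a::euclidean_space set \<Rightarrow> ('a, 'b::real_vector) relu_net \<Rightarrow> bool" where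
  "sampled X N = (case N of (L1, Ls, cs, b) \<Rightarrow>
      (\<forall>(w, c) \<in> set L1. \<exists>x1 x2. x1 \<in> X \<and> x2 \<in> X \<and> x1 \<noteq> x2 \<and>
          w = (1 / (norm (x2 - x1))\<^sup>2) *\<^sub>R (x2 - x1) \<and> c = w \<bullet> x1) \<and>
      (\<forall>k<length Ls. \<forall>(w, c) \<in> set (Ls ! k). \<exists>x1 x2. x1 \<in> X \<and> x2 \<in> X \<and>
          hid L1 Ls k x1 \<noteq> hid L1 Ls k x2 \<and>
          w = scalel (1 / (norml (minusl (hid L1 Ls k x2) (hid L1 Ls k x1)))\<^sup>2)
                     (minusl (hid L1 Ls k x2) (hid L1 Ls k x1)) \<and>
          c = dotl w (hid L1 Ls k x1)))"

end

(*
  One hidden layer suffices.  A sampled neuron built from x1, x2 is, up to the positive factor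
  |x2 - x1|^2, the ridge function relu ((x2 - x1) . (x - x1)).  Because X is the r-thickening of
  a compact set, every level set of v . _ that meets X contains a chord of X in direction v, so
  the ridge ReLUs relu (v . y - v . x) with x in X, and hence the linear functions v . y, are
  realized on X.  On the compact set of values v . X, a ReLU with any other threshold is an affine
  combination of those, and piecewise linear interpolation then approximates every continuous
  ridge function g (v . y) uniformly on X, in particular exp (u . y).  The exponential
  polynomials form a point-separating algebra, so by Stone-Weierstrass they are dense in C(X),
  and therefore so are the realizable functions; vector-valued targets are handled
  componentwise.
*)

theory Submission
  imports Defs
begin

section \<open>ReLU on the real line\<close>

lemma relu_eq_self: "0 \<le> z \<Longrightarrow> relu z = z"
  by (simp add: relu_def)

lemma relu_eq_0: "z \<le> 0 \<Longrightarrow> relu z = 0"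
  by (simp add: relu_def)

lemma relu_nonneg_mult: "0 \<le> c \<Longrightarrow> relu (c * z) = c * relu z"
  by (simp add: relu_def max_mult_distrib_left)

lemma relu_minus: "relu (- z) = relu z - z"
  by (simp add: relu_def max_def)

lemma relu_rescale: "a \<noteq> 0 \<Longrightarrow> relu z = relu (a * z) / \<bar>a\<bar> + (if a < 0 then z else 0)"
  by (cases "0 \<le> z") (auto simp: relu_def max_def field_simps mult_le_0_iff zero_le_mult_iff)

lemma piecewise_linear_relu_interpolation:
  fixes g :: "real \<Rightarrow> real" and s :: "nat \<Rightarrow> real"
  assumes mono: "\<And>k. s k < s (Suc k)" and "0 \<le> \<epsilon>"
    and "\<And>k t. k < n \<Longrightarrow> s k \<le> t \<Longrightarrow> t \<le> s (Suc k) \<Longrightarrow> \<bar>g t - g (s k)\<bar> \<le> \<epsilon>"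
    and "s 0 \<le> t" "t \<le> s n"
  shows "\<bar>g t - (g (s 0) + (\<Sum>k<n. (g (s (Suc k)) - g (s k)) / (s (Suc k) - s k)
                                     * (relu (t - s k) - relu (t - s (Suc k)))))\<bar> \<le> 2 * \<epsilon>"
  using assms(3-)
proof (induction n)
  case 0
  then show ?case using \<open>0 \<le> \<epsilon>\<close> by simp
next
  case (Suc n)
  define D where "D k = g (s (Suc k)) - g (s k)" for k
  define ramp where "ramp k = D k / (s (Suc k) - s k) * (relu (t - s k) - relu (t - s (Suc k)))" for k
  have "\<bar>g t - (g (s 0) + (\<Sum>k<Suc n. ramp k))\<bar> \<le> 2 * \<epsilon>"
  proof (cases "t \<le> s n")
    case True
    then have "ramp n = 0"
      using mono[of n] by (simp add: ramp_def relu_eq_0)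
    moreover have "\<bar>g t - (g (s 0) + (\<Sum>k<n. ramp k))\<bar> \<le> 2 * \<epsilon>"
      using Suc True unfolding ramp_def D_def by simp
    ultimately show ?thesis by simp
  next
    case False
    have knots_below: "s (Suc k) \<le> s n" if "k < n" for k
      using that mono by (simp add: strict_mono_Suc_iff strict_mono_less_eq)
    have "ramp k = D k" if "k < n" for k
    proof -
      have "s k < t" "s (Suc k) < t"
        using knots_below[OF that] False mono[of k] by linarith+
      then show ?thesis
        using mono[of k] by (simp add: ramp_def relu_eq_self)
    qed
    then have "(\<Sum>k<n. ramp k) = g (s n) - g (s 0)"
      using sum_lessThan_telescope[of "\<lambda>k. g (s k)" n] by (simp add: D_def)
    moreover have "ramp n = D n * ((t - s n) / (s (Suc n) - s n))"
      using False Suc.prems mono[of n] by (simp add: ramp_def relu_eq_self relu_eq_0)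
    moreover have "0 \<le> (t - s n) / (s (Suc n) - s n)" "(t - s n) / (s (Suc n) - s n) \<le> 1"
      using False Suc.prems mono[of n] by auto
    then have "\<bar>D n * ((t - s n) / (s (Suc n) - s n))\<bar> \<le> \<bar>D n\<bar>"
      unfolding abs_mult by (metis abs_ge_zero abs_of_nonneg mult_left_le)
    moreover have "\<bar>D n\<bar> \<le> \<epsilon>" "\<bar>g t - g (s n)\<bar> \<le> \<epsilon>"
      using Suc.prems(1)[of n] False Suc.prems mono[of n] by (auto simp: D_def)
    ultimately show ?thesis
      unfolding sum.lessThan_Suc by linarith
  qed
  then show ?case unfolding ramp_def D_def .
qed

lemma continuous_on_interval_relu_approx:
  fixes g :: "real \<Rightarrow> real"
  assumes "continuous_on {a..b} g" and "a < b" and "0 < \<epsilon>"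
  obtains \<beta> \<alpha> c d and n :: nat where
    "\<And>t. t \<in> {a..b} \<Longrightarrow> \<bar>g t - (\<beta> + (\<Sum>k<n. \<alpha> k * (relu (t - c k) - relu (t - d k))))\<bar> < \<epsilon>"
proof -
  obtain \<delta> where "0 < \<delta>"
    and osc: "\<And>s t. s \<in> {a..b} \<Longrightarrow> t \<in> {a..b} \<Longrightarrow> dist t s < \<delta> \<Longrightarrow> dist (g t) (g s) < \<epsilon> / 3"
    using compact_uniformly_continuous[OF assms(1) compact_Icc] \<open>0 < \<epsilon>\<close>
    unfolding uniformly_continuous_on_def by (metis divide_pos_pos zero_less_numeral)
  obtain n :: nat where n: "(b - a) / \<delta> < n"
    using reals_Archimedean2 by blast
  then have "0 < n"
    using \<open>a < b\<close> \<open>0 < \<delta>\<close> by (metis divide_pos_pos diff_gt_0_iff_gt of_nat_0_less_iff order.strict_trans)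
  define h where "h = (b - a) / n"
  have "0 < h" "h < \<delta>"
    using \<open>a < b\<close> \<open>0 < n\<close> n \<open>0 < \<delta>\<close> by (auto simp: h_def field_simps)
  define s where "s k = a + k * h" for k :: nat
  have s_n: "s n = b"
    using \<open>0 < n\<close> by (simp add: s_def h_def)
  have s_in: "s k \<in> {a..b}" if "k \<le> n" for k
    using that \<open>0 < h\<close> s_n by (auto simp: s_def intro: mult_right_mono)
  have "\<bar>g t - g (s k)\<bar> \<le> \<epsilon> / 3" if "k < n" "s k \<le> t" "t \<le> s (Suc k)" for k t
  proof -
    have "t \<in> {a..b}"
      using that s_in[of k] s_in[of "Suc k"] by auto
    moreover have "dist t (s k) < \<delta>"
      using that \<open>h < \<delta>\<close> by (simp add: s_def dist_real_def algebra_simps)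
    ultimately show ?thesis
      using osc[of "s k" t] s_in[of k] that by (simp add: dist_real_def)
  qed
  from piecewise_linear_relu_interpolation[of s "\<epsilon> / 3" n g, OF _ _ this]
  have "\<bar>g t - (g a + (\<Sum>k<n. (g (s (Suc k)) - g (s k)) / h * (relu (t - s k) - relu (t - s (Suc k)))))\<bar> < \<epsilon>"
    if "t \<in> {a..b}" for t
    using that \<open>0 < h\<close> \<open>0 < \<epsilon>\<close> s_n by (fastforce simp: s_def algebra_simps)
  then show ?thesis
    by (rule that[where \<beta> = "g a" and \<alpha> = "\<lambda>k. (g (s (Suc k)) - g (s k)) / h"
          and c = s and d = "\<lambda>k. s (Suc k)"])
qed

lemma relu_convex_combination:
  fixes t c c1 c2 :: real
  assumes "0 \<le> k" "k \<le> 1" "c = k * c1 + (1 - k) * c2" "c1 \<le> c2" "t \<le> c1 \<or> c2 \<le> t"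
  shows "relu (t - c) = k * relu (t - c1) + (1 - k) * relu (t - c2)"
proof -
  have "c - c1 = (1 - k) * (c2 - c1)" "c2 - c = k * (c2 - c1)"
    using assms(3) by (simp_all add: algebra_simps)
  then have "c1 \<le> c" "c \<le> c2"
    using assms(1,2,4) by (metis diff_ge_0_iff_ge mult_nonneg_nonneg)+
  then show ?thesis
    using assms(3,5) by (auto simp: relu_eq_0 relu_eq_self algebra_simps)
qed

text \<open>If \<open>c\<close> falls into a gap of \<open>T\<close>, interpolate between the ReLUs at the two ends of the gap.\<close>
lemma relu_on_compact_threshold_decomposition:
  fixes T :: "real set"
  assumes "compact T" and "T \<noteq> {}"
  obtains c1 c2 \<alpha> \<beta> \<gamma>1 \<gamma>2 where "c1 \<in> T" "c2 \<in> T"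
    "\<And>t. t \<in> T \<Longrightarrow> relu (t - c) = \<alpha> + \<beta> * t + \<gamma>1 * relu (t - c1) + \<gamma>2 * relu (t - c2)"
proof -
  obtain t0 where "t0 \<in> T"
    using assms(2) by blast
  consider "T \<inter> {..c} = {}" | "T \<inter> {c..} = {}" | "T \<inter> {..c} \<noteq> {}" "T \<inter> {c..} \<noteq> {}"
    by blast
  then show thesis
  proof cases
    case 1
    then have "relu (t - c) = - c + 1 * t + 0 * relu (t - t0) + 0 * relu (t - t0)" if "t \<in> T" for t
      using that by (subst relu_eq_self) auto
    then show thesis
      using that \<open>t0 \<in> T\<close> by blast
  next
    case 2
    then have "relu (t - c) = 0 + 0 * t + 0 * relu (t - t0) + 0 * relu (t - t0)" if "t \<in> T" for t
      using that by (subst relu_eq_0) auto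
    then show thesis
      using that \<open>t0 \<in> T\<close> by blast
  next
    case 3
    obtain c1 where c1: "c1 \<in> T \<inter> {..c}" "\<And>t. t \<in> T \<inter> {..c} \<Longrightarrow> t \<le> c1"
      using compact_attains_sup[OF compact_Int_closed[OF assms(1) closed_atMost] 3(1)] by blast
    obtain c2 where c2: "c2 \<in> T \<inter> {c..}" "\<And>t. t \<in> T \<inter> {c..} \<Longrightarrow> c2 \<le> t"
      using compact_attains_inf[OF compact_Int_closed[OF assms(1) closed_atLeast] 3(2)] by blast
    define k where "k = (c2 - c) / (c2 - c1)" \<comment> \<open>\<open>k = 0\<close> if \<open>c1 = c = c2\<close>, by division by zero\<close>
    have "c1 \<le> c" "c \<le> c2"
      using c1(1) c2(1) by auto
    have "0 \<le> k \<and> k \<le> 1 \<and> c = k * c1 + (1 - k) * c2"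
    proof (cases "c1 = c2")
      case True
      then show ?thesis
        using \<open>c1 \<le> c\<close> \<open>c \<le> c2\<close> by (simp add: k_def)
    next
      case False
      then have "0 < c2 - c1"
        using \<open>c1 \<le> c\<close> \<open>c \<le> c2\<close> by simp
      then have "k * (c2 - c1) = c2 - c" "0 \<le> k" "k \<le> 1"
        using \<open>c1 \<le> c\<close> \<open>c \<le> c2\<close> by (simp_all add: k_def divide_le_eq_1_pos)
      then show ?thesis
        unfolding right_diff_distrib left_diff_distrib by simp
    qed
    then have "relu (t - c) = 0 + 0 * t + k * relu (t - c1) + (1 - k) * relu (t - c2)" if "t \<in> T" for t
      using \<open>0 \<le> k \<and> _\<close> relu_convex_combination[of k c c1 c2 t] c1 c2 that by force
    then show thesis
      using that c1(1) c2(1) by blast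
  qed
qed

section \<open>Sampled networks with one hidden layer\<close>

definition sampled_neurons :: "'a::euclidean_space set \<Rightarrow> ('a \<times> real) set" where
  "sampled_neurons X = {(w, b). \<exists>x1 x2. x1 \<in> X \<and> x2 \<in> X \<and> x1 \<noteq> x2 \<and>
                           w = (1 / (norm (x2 - x1))\<^sup>2) *\<^sub>R (x2 - x1) \<and> b = w \<bullet> x1}"

definition sampled_realizable :: "'a::euclidean_space set \<Rightarrow> ('a \<Rightarrow> 'b::real_vector) \<Rightarrow> bool" where
  "sampled_realizable X g \<longleftrightarrow>
     (\<exists>L1 cs b. L1 \<noteq> [] \<and> length cs = length L1 \<and> set L1 \<subseteq> sampled_neurons X \<and>
                 (\<forall>x\<in>X. net_eval (L1, [], cs, b) x = g x))"

lemma sampled_neuronsI: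
  "x1 \<in> X \<Longrightarrow> x2 \<in> X \<Longrightarrow> x1 \<noteq> x2 \<Longrightarrow> w = (1 / (norm (x2 - x1))\<^sup>2) *\<^sub>R (x2 - x1) \<Longrightarrow>
    (w, w \<bullet> x1) \<in> sampled_neurons X"
  unfolding sampled_neurons_def by blast

lemma well_formed_sampled_shallow_iff:
  "well_formed (L1, [], cs, b) \<and> sampled X (L1, [], cs, b) \<longleftrightarrow>
     L1 \<noteq> [] \<and> length cs = length L1 \<and> set L1 \<subseteq> sampled_neurons X"
  unfolding well_formed_def sampled_def sampled_neurons_def by (simp add: subset_code(1))

lemma net_eval_shallow:
  "net_eval (L1, [], cs, b) x = (\<Sum>(t, c)\<leftarrow>zip (eval_first L1 x) cs. t *\<^sub>R c) - b"
  by (simp add: net_eval_def hid_def)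

lemma sampled_realizable_cong:
  "sampled_realizable X g \<Longrightarrow> (\<And>x. x \<in> X \<Longrightarrow> g x = h x) \<Longrightarrow> sampled_realizable X h"
  unfolding sampled_realizable_def by auto

lemma net_eval_shallow_append:
  assumes "length cs = length L1"
  shows "net_eval (L1 @ L1', [], cs @ cs', b + b') x = net_eval (L1, [], cs, b) x + net_eval (L1', [], cs', b') x"
proof -
  have "eval_first (L1 @ L1') x = eval_first L1 x @ eval_first L1' x"
    by (simp add: eval_first_def)
  moreover have "length (eval_first L1 x) = length cs"
    using assms by (simp add: eval_first_def)
  ultimately show ?thesis
    by (simp add: net_eval_shallow zip_append algebra_simps)
qed

lemma sampled_realizable_add:
  assumes "sampled_realizable X g" and "sampled_realizable X h"
  shows "sampled_realizable X (\<lambda>x. g x + h x)"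
proof -
  obtain L1 cs b L1' cs' b' where
    "L1 \<noteq> []" "length cs = length L1" "set L1 \<subseteq> sampled_neurons X" "\<forall>x\<in>X. net_eval (L1, [], cs, b) x = g x"
    "L1' \<noteq> []" "length cs' = length L1'" "set L1' \<subseteq> sampled_neurons X" "\<forall>x\<in>X. net_eval (L1', [], cs', b') x = h x"
    using assms unfolding sampled_realizable_def by blast
  then show ?thesis
    unfolding sampled_realizable_def
    by (intro exI[of _ "L1 @ L1'"] exI[of _ "cs @ cs'"] exI[of _ "b + b'"]) (simp add: net_eval_shallow_append)
qed

lemma linear_sum_list: "linear L \<Longrightarrow> L (sum_list xs) = sum_list (map L xs)"
  by (induction xs) (simp_all add: linear_add linear_0)

lemma sampled_realizable_linear:
  assumes "linear L" and "sampled_realizable X g"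
  shows "sampled_realizable X (\<lambda>x. L (g x))"
proof -
  obtain L1 cs b where
    "L1 \<noteq> []" "length cs = length L1" "set L1 \<subseteq> sampled_neurons X" "\<forall>x\<in>X. net_eval (L1, [], cs, b) x = g x"
    using assms(2) unfolding sampled_realizable_def by blast
  moreover have "net_eval (L1, [], map L cs, L b) x = L (net_eval (L1, [], cs, b) x)" for x
    using assms(1) by (simp add: net_eval_shallow linear_sum_list linear_diff linear_scale
        zip_map2 o_def case_prod_beta)
  ultimately show ?thesis
    unfolding sampled_realizable_def
    by (intro exI[of _ L1] exI[of _ "map L cs"] exI[of _ "L b"]) auto
qed

lemma sampled_realizable_scale:
  fixes g :: "'a::euclidean_space \<Rightarrow> real"
  shows "sampled_realizable X g \<Longrightarrow> sampled_realizable X (\<lambda>x. c * g x)"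
  by (rule sampled_realizable_linear[OF linear_times])

lemma sampled_realizable_diff:
  fixes g h :: "'a::euclidean_space \<Rightarrow> real"
  assumes "sampled_realizable X g" and "sampled_realizable X h"
  shows "sampled_realizable X (\<lambda>x. g x - h x)"
  using sampled_realizable_add[OF assms(1) sampled_realizable_scale[OF assms(2), of "-1"]] by simp

lemma sampled_realizable_const:
  assumes "x1 \<in> X" "x2 \<in> X" "x1 \<noteq> x2"
  shows "sampled_realizable X (\<lambda>_. c)"
proof -
  define w where "w = (1 / (norm (x2 - x1))\<^sup>2) *\<^sub>R (x2 - x1)"
  have "(w, w \<bullet> x1) \<in> sampled_neurons X"
    using assms w_def by (rule sampled_neuronsI)
  then show ?thesis
    unfolding sampled_realizable_def
    by (intro exI[of _ "[(w, w \<bullet> x1)]"] exI[of _ "[0]"] exI[of _ "- c"])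
      (simp add: net_eval_shallow eval_first_def)
qed

text \<open>Scaling a sampled neuron by \<open>\<parallel>x2 - x1\<parallel>\<^sup>2\<close> removes the normalization of its weight.\<close>
lemma sampled_realizable_relu_secant:
  assumes "x1 \<in> X" "x2 \<in> X" "x1 \<noteq> x2"
  shows "sampled_realizable X (\<lambda>x. relu ((x2 - x1) \<bullet> (x - x1)))"
proof -
  define w where "w = (1 / (norm (x2 - x1))\<^sup>2) *\<^sub>R (x2 - x1)"
  have "(w, w \<bullet> x1) \<in> sampled_neurons X"
    using assms w_def by (rule sampled_neuronsI)
  moreover have "relu (w \<bullet> x - w \<bullet> x1) * (norm (x2 - x1))\<^sup>2 = relu ((x2 - x1) \<bullet> (x - x1))" for x
  proof -
    have "w \<bullet> x - w \<bullet> x1 = (x2 - x1) \<bullet> (x - x1) / (norm (x2 - x1))\<^sup>2"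
      by (simp add: w_def inner_diff_right diff_divide_distrib)
    then show ?thesis
      using relu_nonneg_mult[of "(norm (x2 - x1))\<^sup>2" "(x2 - x1) \<bullet> (x - x1) / (norm (x2 - x1))\<^sup>2"] assms(3)
      by simp
  qed
  ultimately show ?thesis
    unfolding sampled_realizable_def
    by (intro exI[of _ "[(w, w \<bullet> x1)]"] exI[of _ "[(norm (x2 - x1))\<^sup>2]"] exI[of _ 0])
      (simp add: net_eval_shallow eval_first_def)
qed

lemma sampled_realizable_sum:
  fixes g :: "'i \<Rightarrow> 'a::euclidean_space \<Rightarrow> 'b::real_vector"
  assumes "finite I" and "sampled_realizable X (\<lambda>_. 0 :: 'b)"
    and "\<And>i. i \<in> I \<Longrightarrow> sampled_realizable X (g i)"
  shows "sampled_realizable X (\<lambda>x. \<Sum>i\<in>I. g i x)"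
  using assms by (induction I rule: finite_induct) (auto intro: sampled_realizable_add)

definition sampled_approximable :: "'a::euclidean_space set \<Rightarrow> ('a \<Rightarrow> 'b::real_normed_vector) \<Rightarrow> bool" where
  "sampled_approximable X g \<longleftrightarrow> (\<forall>\<epsilon>>0. \<exists>h. sampled_realizable X h \<and> (\<forall>x\<in>X. norm (g x - h x) < \<epsilon>))"

lemma sampled_realizable_imp_approximable:
  "sampled_realizable X g \<Longrightarrow> sampled_approximable X g"
  unfolding sampled_approximable_def by (metis diff_self norm_zero)

lemma sampled_approximable_uniform_limit:
  assumes "\<And>\<epsilon>. 0 < \<epsilon> \<Longrightarrow> \<exists>p. sampled_approximable X p \<and> (\<forall>x\<in>X. norm (g x - p x) < \<epsilon>)"
  shows "sampled_approximable X g"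
  unfolding sampled_approximable_def
proof (intro allI impI)
  fix \<epsilon> :: real
  assume "0 < \<epsilon>"
  then obtain p where "sampled_approximable X p" and p: "\<forall>x\<in>X. norm (g x - p x) < \<epsilon> / 2"
    using assms[of "\<epsilon> / 2"] by auto
  then obtain h where "sampled_realizable X h" and h: "\<forall>x\<in>X. norm (p x - h x) < \<epsilon> / 2"
    using \<open>0 < \<epsilon>\<close> unfolding sampled_approximable_def by (meson half_gt_zero)
  moreover have "norm (g x - h x) < \<epsilon>" if "x \<in> X" for x
    using norm_diff_triangle_less[OF bspec[OF p that] bspec[OF h that]] by simp
  ultimately show "\<exists>h. sampled_realizable X h \<and> (\<forall>x\<in>X. norm (g x - h x) < \<epsilon>)"
    by blast
qed

lemma sampled_approximable_add:
  assumes "sampled_approximable X g" and "sampled_approximable X h"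
  shows "sampled_approximable X (\<lambda>x. g x + h x)"
  unfolding sampled_approximable_def
proof (intro allI impI)
  fix \<epsilon> :: real
  assume "0 < \<epsilon>"
  then obtain g' h' where "sampled_realizable X g'" "sampled_realizable X h'"
    and "\<forall>x\<in>X. norm (g x - g' x) < \<epsilon> / 2" "\<forall>x\<in>X. norm (h x - h' x) < \<epsilon> / 2"
    using assms unfolding sampled_approximable_def by (meson half_gt_zero)
  moreover have "norm (g x + h x - (g' x + h' x)) < \<epsilon>"
    if "norm (g x - g' x) < \<epsilon> / 2" "norm (h x - h' x) < \<epsilon> / 2" for x
    using norm_triangle_lt[of "g x - g' x" "h x - h' x" \<epsilon>] that by (simp add: algebra_simps)
  ultimately show "\<exists>s. sampled_realizable X s \<and> (\<forall>x\<in>X. norm (g x + h x - s x) < \<epsilon>)"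
    by (metis (no_types, lifting) sampled_realizable_add)
qed

lemma sampled_approximable_linear:
  assumes "bounded_linear L" and "sampled_approximable X g"
  shows "sampled_approximable X (\<lambda>x. L (g x))"
  unfolding sampled_approximable_def
proof (intro allI impI)
  fix \<epsilon> :: real
  assume "0 < \<epsilon>"
  obtain K where "0 < K" and K: "\<And>z. norm (L z) \<le> norm z * K"
    using bounded_linear.pos_bounded[OF assms(1)] by blast
  obtain h where "sampled_realizable X h" and h: "\<forall>x\<in>X. norm (g x - h x) < \<epsilon> / K"
    using assms(2) \<open>0 < \<epsilon>\<close> \<open>0 < K\<close> unfolding sampled_approximable_def by (meson divide_pos_pos)
  moreover have "norm (L (g x) - L (h x)) < \<epsilon>" if "x \<in> X" for x
  proof -
    have "norm (L (g x) - L (h x)) \<le> norm (g x - h x) * K"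
      using K[of "g x - h x"] linear_diff[OF bounded_linear.linear[OF assms(1)]] by simp
    also have "\<dots> < \<epsilon>"
      using h that \<open>0 < K\<close> by (simp add: pos_less_divide_eq)
    finally show ?thesis .
  qed
  ultimately show "\<exists>s. sampled_realizable X s \<and> (\<forall>x\<in>X. norm (L (g x) - s x) < \<epsilon>)"
    using sampled_realizable_linear[OF bounded_linear.linear[OF assms(1)]] by blast
qed

lemma sampled_approximable_sum:
  fixes g :: "'i \<Rightarrow> 'a::euclidean_space \<Rightarrow> 'b::real_normed_vector"
  assumes "finite I" and "sampled_realizable X (\<lambda>_. 0 :: 'b)"
    and "\<And>i. i \<in> I \<Longrightarrow> sampled_approximable X (g i)"
  shows "sampled_approximable X (\<lambda>x. \<Sum>i\<in>I. g i x)"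
  using assms
  by (induction I rule: finite_induct)
    (auto intro: sampled_approximable_add sampled_realizable_imp_approximable)

section \<open>Exponential polynomials\<close>

inductive exp_polynomial :: "('a::real_inner \<Rightarrow> real) \<Rightarrow> bool" where
  exp_polynomial_exp: "exp_polynomial (\<lambda>x. c * exp (u \<bullet> x))"
| exp_polynomial_add: "exp_polynomial f \<Longrightarrow> exp_polynomial g \<Longrightarrow> exp_polynomial (\<lambda>x. f x + g x)"

lemma exp_polynomial_const: "exp_polynomial (\<lambda>x. c)"
  using exp_polynomial_exp[of c 0] by simp

lemma exp_polynomial_mult:
  assumes "exp_polynomial f" and "exp_polynomial g"
  shows "exp_polynomial (\<lambda>x. f x * g x)"
  using assms
proof (induction f rule: exp_polynomial.induct)
  case (exp_polynomial_exp c u)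
  then show ?case
  proof (induction g rule: exp_polynomial.induct)
    case (exp_polynomial_exp d w)
    have "(\<lambda>x. c * exp (u \<bullet> x) * (d * exp (w \<bullet> x))) = (\<lambda>x. (c * d) * exp ((u + w) \<bullet> x))"
      by (simp add: fun_eq_iff inner_add_left exp_add)
    then show ?case
      using exp_polynomial.exp_polynomial_exp[of "c * d" "u + w"] by simp
  next
    case (exp_polynomial_add g1 g2)
    then show ?case
      using exp_polynomial.exp_polynomial_add by (simp add: distrib_left)
  qed
next
  case (exp_polynomial_add f1 f2)
  then show ?case
    using exp_polynomial.exp_polynomial_add by (simp add: distrib_right)
qed

lemma exp_polynomial_continuous_on: "exp_polynomial f \<Longrightarrow> continuous_on S f"
  by (induction rule: exp_polynomial.induct) (auto intro!: continuous_intros)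

lemma exp_polynomial_separating:
  assumes "x \<noteq> y"
  shows "\<exists>f. exp_polynomial f \<and> f x \<noteq> f y"
proof -
  have "(x - y) \<bullet> x - (x - y) \<bullet> y > 0"
    using assms by (simp flip: inner_diff_right)
  then have "1 * exp ((x - y) \<bullet> x) \<noteq> 1 * exp ((x - y) \<bullet> y)"
    by simp
  then show ?thesis
    using exp_polynomial_exp by blast
qed

section \<open>Thickened compact sets\<close>

locale thickened_compact =
  fixes X' :: "'a::euclidean_space set" and r :: real
  assumes compact_core: "compact X'" and core_nonempty: "X' \<noteq> {}" and radius_pos: "0 < r"
begin

abbreviation X :: "'a set" where
  "X \<equiv> {x. infdist x X' \<le> r}"

lemma thickeningI: "q \<in> X' \<Longrightarrow> dist q y \<le> r \<Longrightarrow> y \<in> X"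
  using infdist_le[of q X' y] by (simp add: dist_commute)

lemma thickening_near_core:
  assumes "x \<in> X"
  obtains q where "q \<in> X'" "dist x q \<le> r"
proof -
  obtain q where "q \<in> X'" "infdist x X' = dist x q"
    using infdist_attains_inf[OF compact_imp_closed[OF compact_core] core_nonempty] by blast
  then show thesis
    using that assms by simp
qed

lemma compact_thickening: "compact X"
proof -
  obtain R where R: "\<And>q. q \<in> X' \<Longrightarrow> norm q \<le> R"
    using compact_imp_bounded[OF compact_core] bounded_iff by blast
  have "norm x \<le> R + r" if x: "x \<in> X" for x
  proof -
    obtain q where "q \<in> X'" "dist x q \<le> r"
      using thickening_near_core[OF x] .
    then show ?thesis
      using R[of q] norm_triangle_ineq2[of x q] by (simp add: dist_norm)
  qed
  then have "bounded X"
    unfolding bounded_iff by blast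
  moreover have "closed X"
    by (intro closed_Collect_le continuous_intros)
  ultimately show ?thesis
    by (simp add: compact_eq_bounded_closed)
qed

lemma sampled_realizable_const_thickening: "sampled_realizable X (\<lambda>_. c)"
proof -
  obtain q where q: "q \<in> X'"
    using core_nonempty by blast
  obtain i :: 'a where "i \<in> Basis"
    using nonempty_Basis by blast
  then have "q \<in> X" "q + r *\<^sub>R i \<in> X" "q \<noteq> q + r *\<^sub>R i"
    using thickeningI[OF q] radius_pos by (auto simp: dist_norm)
  then show ?thesis
    by (rule sampled_realizable_const)
qed

text \<open>The line through \<open>x\<close> in direction \<open>v\<close> may only touch \<open>X\<close> at \<open>x\<close>, so the chord is taken instead
  on the diameter in direction \<open>v\<close> of a ball of radius \<open>r\<close> around a core point near \<open>x\<close>.\<close>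
lemma parallel_chord:
  assumes "norm v = 1" and "x \<in> X"
  obtains x1 a where "x1 \<in> X" "x1 + a *\<^sub>R v \<in> X" "a \<noteq> 0" "v \<bullet> x1 = v \<bullet> x"
proof -
  obtain q where q: "q \<in> X'" "dist x q \<le> r"
    using thickening_near_core[OF assms(2)] .
  define s where "s = v \<bullet> (x - q)"
  have "\<bar>s\<bar> \<le> r"
    using Cauchy_Schwarz_ineq2[of v "x - q"] assms(1) q(2) by (simp add: s_def dist_norm)
  define a where "a = (if s \<le> 0 then r else - r)"
  have "\<bar>s + a\<bar> \<le> r"
    using \<open>\<bar>s\<bar> \<le> r\<close> by (auto simp: a_def)
  have "q + s *\<^sub>R v \<in> X"
    using thickeningI[OF q(1)] \<open>\<bar>s\<bar> \<le> r\<close> assms(1) by (simp add: dist_norm)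
  moreover have "q + s *\<^sub>R v + a *\<^sub>R v \<in> X"
    using thickeningI[OF q(1), of "q + (s + a) *\<^sub>R v"] \<open>\<bar>s + a\<bar> \<le> r\<close> assms(1)
    unfolding add.assoc scaleR_add_left[symmetric] by (simp add: dist_norm)
  moreover have "a \<noteq> 0"
    using radius_pos by (simp add: a_def)
  moreover have "v \<bullet> (q + s *\<^sub>R v) = v \<bullet> x"
    using assms(1) by (simp add: s_def inner_diff_right inner_add_right norm_eq_1)
  ultimately show thesis
    by (rule that)
qed

lemma sampled_realizable_inner:
  assumes "norm v = 1"
  shows "sampled_realizable X (\<lambda>y. v \<bullet> y)"
proof -
  obtain q where q: "q \<in> X'"
    using core_nonempty by blast
  have in_X: "q \<in> X" "q + r *\<^sub>R v \<in> X" "q - r *\<^sub>R v \<in> X"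
    using thickeningI[OF q] radius_pos assms by (auto simp: dist_norm)
  have "q \<noteq> q + r *\<^sub>R v" "q \<noteq> q - r *\<^sub>R v"
    using radius_pos assms by auto
  then have "sampled_realizable X (\<lambda>y. relu (r * (v \<bullet> y - v \<bullet> q)))"
    "sampled_realizable X (\<lambda>y. relu (- (r * (v \<bullet> y - v \<bullet> q))))"
    using sampled_realizable_relu_secant[OF in_X(1,2)] sampled_realizable_relu_secant[OF in_X(1,3)]
    by (simp_all add: inner_diff_right right_diff_distrib)
  then have "sampled_realizable X
      (\<lambda>y. 1 / r * (relu (r * (v \<bullet> y - v \<bullet> q)) - relu (- (r * (v \<bullet> y - v \<bullet> q)))) + v \<bullet> q)"
    by (intro sampled_realizable_add sampled_realizable_scale sampled_realizable_diff
        sampled_realizable_const_thickening)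
  then show ?thesis
    by (rule sampled_realizable_cong) (use radius_pos in \<open>simp add: relu_minus\<close>)
qed

lemma sampled_realizable_relu_ridge_at:
  assumes "norm v = 1" and "x \<in> X"
  shows "sampled_realizable X (\<lambda>y. relu (v \<bullet> y - v \<bullet> x))"
proof -
  obtain x1 a where chord: "x1 \<in> X" "x1 + a *\<^sub>R v \<in> X" "a \<noteq> 0" "v \<bullet> x1 = v \<bullet> x"
    using parallel_chord[OF assms] .
  then have "x1 \<noteq> x1 + a *\<^sub>R v"
    using assms(1) by auto
  from sampled_realizable_relu_secant[OF chord(1,2) this]
  have "sampled_realizable X (\<lambda>y. relu (a * (v \<bullet> y - v \<bullet> x)))"
    by (rule sampled_realizable_cong) (simp add: chord(4) inner_diff_right right_diff_distrib)
  moreover have "sampled_realizable X (\<lambda>y. if a < 0 then v \<bullet> y - v \<bullet> x else 0)"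
    using sampled_realizable_diff[OF sampled_realizable_inner[OF assms(1)] sampled_realizable_const_thickening]
      sampled_realizable_const_thickening
    by (cases "a < 0") simp_all
  ultimately have "sampled_realizable X
      (\<lambda>y. inverse \<bar>a\<bar> * relu (a * (v \<bullet> y - v \<bullet> x)) + (if a < 0 then v \<bullet> y - v \<bullet> x else 0))"
    by (intro sampled_realizable_add sampled_realizable_scale)
  then show ?thesis
  proof (rule sampled_realizable_cong)
    fix y
    show "inverse \<bar>a\<bar> * relu (a * (v \<bullet> y - v \<bullet> x)) + (if a < 0 then v \<bullet> y - v \<bullet> x else 0)
          = relu (v \<bullet> y - v \<bullet> x)"
      using relu_rescale[OF chord(3), of "v \<bullet> y - v \<bullet> x"] by (simp add: divide_inverse mult.commute)
  qed
qed

lemma sampled_realizable_relu_ridge: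
  assumes "norm v = 1"
  shows "sampled_realizable X (\<lambda>y. relu (v \<bullet> y - c))"
proof -
  have "compact ((\<lambda>y. v \<bullet> y) ` X)"
    by (intro compact_continuous_image compact_thickening continuous_intros)
  moreover obtain q where "q \<in> X'"
    using core_nonempty by blast
  then have "(\<lambda>y. v \<bullet> y) ` X \<noteq> {}"
    using thickeningI[of q q] radius_pos by force
  ultimately obtain c1 c2 \<alpha> \<beta> \<gamma>1 \<gamma>2 where "c1 \<in> (\<lambda>y. v \<bullet> y) ` X" "c2 \<in> (\<lambda>y. v \<bullet> y) ` X"
    and decomp: "\<And>t. t \<in> (\<lambda>y. v \<bullet> y) ` X \<Longrightarrow>
                   relu (t - c) = \<alpha> + \<beta> * t + \<gamma>1 * relu (t - c1) + \<gamma>2 * relu (t - c2)"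
    by (rule relu_on_compact_threshold_decomposition) blast
  then obtain x1 x2 where "x1 \<in> X" "x2 \<in> X" "c1 = v \<bullet> x1" "c2 = v \<bullet> x2"
    by blast
  then have "sampled_realizable X
      (\<lambda>y. \<alpha> + \<beta> * (v \<bullet> y) + \<gamma>1 * relu (v \<bullet> y - c1) + \<gamma>2 * relu (v \<bullet> y - c2))"
    using assms
    by (intro sampled_realizable_add sampled_realizable_scale sampled_realizable_inner
        sampled_realizable_const_thickening) (simp_all add: sampled_realizable_relu_ridge_at)
  then show ?thesis
    by (rule sampled_realizable_cong) (simp add: decomp)
qed

lemma sampled_approximable_ridge:
  fixes g :: "real \<Rightarrow> real"
  assumes "norm v = 1" and "continuous_on UNIV g"
  shows "sampled_approximable X (\<lambda>y. g (v \<bullet> y))"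
  unfolding sampled_approximable_def
proof (intro allI impI)
  fix \<epsilon> :: real
  assume "0 < \<epsilon>"
  obtain B where B: "\<forall>y\<in>X. norm y \<le> B"
    using compact_imp_bounded[OF compact_thickening] unfolding bounded_iff ..
  have range: "v \<bullet> y \<in> {- \<bar>B\<bar> - 1 .. \<bar>B\<bar> + 1}" if "y \<in> X" for y
  proof -
    have "\<bar>v \<bullet> y\<bar> \<le> B"
      using Cauchy_Schwarz_ineq2[of v y] bspec[OF B that] assms(1) by simp
    then show ?thesis
      by (simp add: abs_le_iff)
  qed
  have "- \<bar>B\<bar> - 1 < \<bar>B\<bar> + 1"
    by simp
  then obtain \<beta> \<alpha> c d and n :: nat where approx: "\<And>t. t \<in> {- \<bar>B\<bar> - 1 .. \<bar>B\<bar> + 1} \<Longrightarrow>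
      \<bar>g t - (\<beta> + (\<Sum>k<n. \<alpha> k * (relu (t - c k) - relu (t - d k))))\<bar> < \<epsilon>"
    by (rule continuous_on_interval_relu_approx[OF continuous_on_subset[OF assms(2) subset_UNIV] _ \<open>0 < \<epsilon>\<close>])
      blast
  have "sampled_realizable X (\<lambda>y. \<beta> + (\<Sum>k<n. \<alpha> k * (relu (v \<bullet> y - c k) - relu (v \<bullet> y - d k))))"
    by (intro sampled_realizable_add sampled_realizable_sum sampled_realizable_scale
        sampled_realizable_diff sampled_realizable_relu_ridge[OF assms(1)]
        sampled_realizable_const_thickening finite_lessThan)
  moreover have "\<forall>y\<in>X. norm (g (v \<bullet> y) - (\<beta> + (\<Sum>k<n. \<alpha> k * (relu (v \<bullet> y - c k) - relu (v \<bullet> y - d k))))) < \<epsilon>"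
    using approx range by (simp del: atLeastAtMost_iff)
  ultimately show "\<exists>h. sampled_realizable X h \<and> (\<forall>y\<in>X. norm (g (v \<bullet> y) - h y) < \<epsilon>)"
    by blast
qed

lemma sampled_approximable_exp_inner: "sampled_approximable X (\<lambda>y. exp (u \<bullet> y))"
proof (cases "u = 0")
  case True
  then show ?thesis
    using sampled_realizable_imp_approximable[OF sampled_realizable_const_thickening[of 1]] by simp
next
  case False
  define v where "v = u /\<^sub>R norm u"
  have "norm v = 1" "u \<bullet> y = norm u * (v \<bullet> y)" for y
    using False by (simp_all add: v_def)
  moreover have "continuous_on UNIV (\<lambda>t. exp (norm u * t))"
    by (intro continuous_intros)
  ultimately show ?thesis
    using sampled_approximable_ridge[of v "\<lambda>t. exp (norm u * t)"] by simp
qed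

lemma sampled_approximable_exp_polynomial: "exp_polynomial p \<Longrightarrow> sampled_approximable X p"
proof (induction rule: exp_polynomial.induct)
  case (exp_polynomial_exp c u)
  show ?case
    by (rule sampled_approximable_linear[OF bounded_linear_mult_right sampled_approximable_exp_inner])
next
  case (exp_polynomial_add f g)
  show ?case
    using exp_polynomial_add.IH by (rule sampled_approximable_add)
qed

lemma sampled_approximable_continuous_real:
  fixes g :: "'a \<Rightarrow> real"
  assumes "continuous_on X g"
  shows "sampled_approximable X g"
proof (rule sampled_approximable_uniform_limit)
  fix \<epsilon> :: real
  assume "0 < \<epsilon>"
  have "\<exists>p. exp_polynomial p \<and> (\<forall>x\<in>X. \<bar>g x - p x\<bar> < \<epsilon>)"
  proof (rule Stone_Weierstrass_HOL[where P = exp_polynomial, OF compact_thickening _ _ _ _ _ assms \<open>0 < \<epsilon>\<close>])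
    show "exp_polynomial (\<lambda>x. c)" for c
      by (rule exp_polynomial_const)
    show "continuous_on X p" if "exp_polynomial p" for p
      using that by (rule exp_polynomial_continuous_on)
    show "exp_polynomial (\<lambda>x. p x + q x)" "exp_polynomial (\<lambda>x. p x * q x)"
      if "exp_polynomial p \<and> exp_polynomial q" for p q
      using that by (simp_all add: exp_polynomial.exp_polynomial_add exp_polynomial_mult)
    show "\<exists>p. exp_polynomial p \<and> p x \<noteq> p y" if "x \<in> X \<and> y \<in> X \<and> x \<noteq> y" for x y
      using that exp_polynomial_separating by blast
  qed
  then obtain p where "exp_polynomial p" "\<forall>x\<in>X. \<bar>g x - p x\<bar> < \<epsilon>"
    by blast
  then show "\<exists>p. sampled_approximable X p \<and> (\<forall>x\<in>X. norm (g x - p x) < \<epsilon>)"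
    using sampled_approximable_exp_polynomial by auto
qed

lemma sampled_approximable_continuous:
  fixes g :: "'a \<Rightarrow> 'b::euclidean_space"
  assumes "continuous_on X g"
  shows "sampled_approximable X g"
proof -
  have "sampled_approximable X (\<lambda>x. (g x \<bullet> i) *\<^sub>R i)" for i
    using assms
    by (intro sampled_approximable_linear[OF bounded_linear_scaleR_left]
        sampled_approximable_continuous_real continuous_intros)
  then have "sampled_approximable X (\<lambda>x. \<Sum>i\<in>Basis. (g x \<bullet> i) *\<^sub>R i)"
    by (intro sampled_approximable_sum finite_Basis sampled_realizable_const_thickening)
  then show ?thesis
    by (simp add: euclidean_representation)
qed

end

theorem corollary1:
  fixes X' :: "'a::euclidean_space set" and epsI :: real and f :: "'a \<Rightarrow> 'b::euclidean_space"
    and e :: real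
  assumes "compact X'" and "X' \<noteq> {}" and "reach X' > 0"
    and "0 < epsI" and "ereal epsI < reach X'" and "epsI < 1"
    and "continuous_on {x. infdist x X' \<le> epsI} f"
    and "0 < e"
  shows "\<exists>N :: ('a, 'b) relu_net. well_formed N \<and> sampled {x. infdist x X' \<le> epsI} N \<and>
           (\<forall>x \<in> {x. infdist x X' \<le> epsI}. norm (net_eval N x - f x) < e)"
proof -
  interpret thickened_compact X' epsI
    using assms(1,2,4) by unfold_locales
  obtain h where "sampled_realizable X h" and h: "\<forall>x\<in>X. norm (f x - h x) < e"
    using sampled_approximable_continuous[OF assms(7)] assms(8) unfolding sampled_approximable_def by blast
  then obtain L1 cs b where "L1 \<noteq> []" "length cs = length L1" "set L1 \<subseteq> sampled_neurons X"
    and realizes: "\<forall>x\<in>X. net_eval (L1, [], cs, b) x = h x"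
    unfolding sampled_realizable_def by blast
  then have "well_formed (L1, [], cs, b) \<and> sampled X (L1, [], cs, b)"
    by (simp add: well_formed_sampled_shallow_iff)
  moreover have "\<forall>x\<in>X. norm (net_eval (L1, [], cs, b) x - f x) < e"
    using h realizes by (simp add: norm_minus_commute)
  ultimately show ?thesis
    by blast
qed

end
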